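(* Let $n,k\ge 1$, let $f\in\mathcal{B}_c$, and let $X=(X_1,\dots,X_n)$ be a random vector in $\mathbb{R}^n$ (the $X_i$ possibly dependent) such that $P(|X_i|\ge u)\le f(u)$ for all $u\ge 0$ and all $i$. Let $g(x)=\sum_{i=1}^m a_i\,\mu_i(x)+C$, where $C\in\mathbb{R}$ and $\sum_i a_i\mu_i$ is a (nonzero) homogeneous polynomial of degree $k$ in $x_1,\dots,x_n$ written with distinct monomials $\mu_i$ and coefficients $a_i$. Then for all $t\ge C$, $$P(g(X)\ge t)\le n\, f\!\left(\frac{(t-C)^{1/k}}{\left(\sum_i |a_i|\right)^{1/k}}\right).$$
   Context: $\mathcal{B}_c$ is the set of functions $f:[0,\infty)\to(0,\infty)$ that are continuous, strictly decreasing, satisfy $f(0)\ge 1$ and $\lim_{u\to\infty}f(u)=0$. *)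

theory Defs
  imports "HOL-Probability.Probability"
begin

definition Bc :: "(real \<Rightarrow> real) set" where
  "Bc = {f. continuous_on {0..} f \<and> (\<forall>u\<ge>0. f u > 0) \<and> strict_antimono_on {0..} f
            \<and> f 0 \<ge> 1 \<and> (f \<longlongrightarrow> 0) at_top}"

definition monomial_eval :: "nat \<Rightarrow> (nat \<Rightarrow> nat) \<Rightarrow> (nat \<Rightarrow> real) \<Rightarrow> real" where
  "monomial_eval n e x = (\<Prod>i<n. x i ^ e i)"

definition is_monomial_exp :: "nat \<Rightarrow> nat \<Rightarrow> (nat \<Rightarrow> nat) \<Rightarrow> bool" where
  "is_monomial_exp n k e \<longleftrightarrow> (\<forall>i\<ge>n. e i = 0) \<and> (\<Sum>i<n. e i) = k"

end

theory Submission
  imports Defs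
begin

text \<open>Each monomial of degree k is bounded in absolute value by the k-th power of
  max_i |x_i|, so the homogeneous part is at most (\<Sum>|a_e|) (max_i |x_i|)^k. Hence
  g(X) \<ge> t forces |X_i| \<ge> s = ((t - C) / \<Sum>|a_e|)^(1/k) for some i, and a union
  bound over the n coordinates together with the tail bound at s gives n f(s). No
  independence and none of the properties of B_c are needed; the tail hypothesis
  alone is used.\<close>

lemma abs_monomial_eval_le:
  fixes x :: "nat \<Rightarrow> real"
  assumes "is_monomial_exp n k e" and "\<And>i. i < n \<Longrightarrow> \<bar>x i\<bar> \<le> m"
  shows "\<bar>monomial_eval n e x\<bar> \<le> m ^ k"
proof -
  have "\<bar>monomial_eval n e x\<bar> = (\<Prod>i<n. \<bar>x i\<bar> ^ e i)"
    unfolding monomial_eval_def by (simp add: abs_prod power_abs)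
  also have "\<dots> \<le> (\<Prod>i<n. m ^ e i)"
    by (rule prod_mono) (auto intro: power_mono assms(2))
  also have "\<dots> = m ^ (\<Sum>i<n. e i)"
    by (simp add: power_sum)
  also have "\<dots> = m ^ k"
    using assms(1) unfolding is_monomial_exp_def by simp
  finally show ?thesis .
qed

lemma abs_sum_monomials_le:
  fixes x :: "nat \<Rightarrow> real"
  assumes "\<And>e. e \<in> S \<Longrightarrow> is_monomial_exp n k e" and "\<And>i. i < n \<Longrightarrow> \<bar>x i\<bar> \<le> m"
  shows "\<bar>\<Sum>e\<in>S. a e * monomial_eval n e x\<bar> \<le> (\<Sum>e\<in>S. \<bar>a e\<bar>) * m ^ k"
proof -
  have "\<bar>\<Sum>e\<in>S. a e * monomial_eval n e x\<bar> \<le> (\<Sum>e\<in>S. \<bar>a e\<bar> * \<bar>monomial_eval n e x\<bar>)"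
    unfolding abs_mult[symmetric] by (rule sum_abs)
  also have "\<dots> \<le> (\<Sum>e\<in>S. \<bar>a e\<bar> * m ^ k)"
    using abs_monomial_eval_le[OF assms(1) assms(2)] by (intro sum_mono mult_left_mono) auto
  finally show ?thesis
    by (simp add: sum_distrib_right)
qed

lemma exists_abs_ge_if_sum_monomials_ge:
  fixes x :: "nat \<Rightarrow> real"
  assumes "\<And>e. e \<in> S \<Longrightarrow> is_monomial_exp n k e"
    and "n \<ge> 1" and "k \<ge> 1" and "(\<Sum>e\<in>S. \<bar>a e\<bar>) > 0" and "s \<ge> 0"
    and "(\<Sum>e\<in>S. \<bar>a e\<bar>) * s ^ k \<le> (\<Sum>e\<in>S. a e * monomial_eval n e x)"
  shows "\<exists>i<n. s \<le> \<bar>x i\<bar>"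
proof -
  define m where "m = Max ((\<lambda>i. \<bar>x i\<bar>) ` {..<n})"
  have "m \<in> (\<lambda>i. \<bar>x i\<bar>) ` {..<n}"
    unfolding m_def using assms(2) by (intro Max_in) (auto simp: lessThan_empty_iff)
  then obtain i where "i < n" and m_eq: "m = \<bar>x i\<bar>"
    by blast
  have "\<bar>x j\<bar> \<le> m" if "j < n" for j
    unfolding m_def using that by simp
  then have "(\<Sum>e\<in>S. a e * monomial_eval n e x) \<le> (\<Sum>e\<in>S. \<bar>a e\<bar>) * m ^ k"
    using abs_sum_monomials_le[OF assms(1)] by (meson abs_ge_self order_trans)
  then have "(\<Sum>e\<in>S. \<bar>a e\<bar>) * s ^ k \<le> (\<Sum>e\<in>S. \<bar>a e\<bar>) * m ^ k"
    using assms(6) by linarith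
  then have "s ^ k \<le> m ^ k"
    using assms(4) by simp
  then have "s \<le> m"
    using assms(3,5) m_eq by (simp add: power_mono_iff)
  with \<open>i < n\<close> m_eq show ?thesis
    by blast
qed

lemma (in finite_measure) measure_UN_lessThan_le:
  assumes "\<And>i. i < n \<Longrightarrow> A i \<in> sets M" and "\<And>i. i < n \<Longrightarrow> measure M (A i) \<le> b"
  shows "measure M (\<Union>i<n. A i) \<le> real n * b"
proof -
  have "measure M (\<Union>i<n. A i) \<le> (\<Sum>i<n. measure M (A i))"
    using assms(1) by (intro finite_measure_subadditive_finite) auto
  also have "\<dots> \<le> (\<Sum>i<n. b)"
    using assms(2) by (intro sum_mono) auto
  finally show ?thesis
    by simp
qed

lemma mult_power_root_div_root:
  fixes x y :: real
  assumes "x \<ge> 0" and "y > 0" and "k \<ge> 1"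
  shows "y * (x powr (1 / real k) / y powr (1 / real k)) ^ k = x"
proof -
  have "(x powr (1 / real k) / y powr (1 / real k)) ^ k = ((x / y) powr (1 / real k)) ^ k"
    by (simp only: powr_divide)
  also have "\<dots> = ((x / y) powr (1 / real k)) powr real k"
    using assms(3) by (simp add: powr_realpow')
  also have "\<dots> = x / y"
    using assms by (simp add: powr_powr)
  finally show ?thesis
    using assms(2) by simp
qed

theorem corollary3:
  fixes M :: "'a measure" and X :: "nat \<Rightarrow> 'a \<Rightarrow> real"
    and n k :: nat and f :: "real \<Rightarrow> real"
    and S :: "(nat \<Rightarrow> nat) set" and a :: "(nat \<Rightarrow> nat) \<Rightarrow> real"
    and C t :: real
  assumes "prob_space M"
    and "n \<ge> 1" and "k \<ge> 1"
    and "f \<in> Bc"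
    and "\<And>i. i < n \<Longrightarrow> X i \<in> borel_measurable M"
    and "\<And>i u. i < n \<Longrightarrow> u \<ge> 0 \<Longrightarrow>
           measure M {\<omega> \<in> space M. \<bar>X i \<omega>\<bar> \<ge> u} \<le> f u"
    and "finite S" and "\<And>e. e \<in> S \<Longrightarrow> is_monomial_exp n k e"
    and "\<exists>e\<in>S. a e \<noteq> 0"
    and "t \<ge> C"
  shows "measure M {\<omega> \<in> space M.
            (\<Sum>e\<in>S. a e * monomial_eval n e (\<lambda>i. X i \<omega>)) + C \<ge> t}
         \<le> real n * f ((t - C) powr (1 / real k) / (\<Sum>e\<in>S. \<bar>a e\<bar>) powr (1 / real k))"
proof -
  interpret prob_space M by fact
  define A where "A = (\<Sum>e\<in>S. \<bar>a e\<bar>)"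
  define s where "s = (t - C) powr (1 / real k) / A powr (1 / real k)"
  obtain e where "e \<in> S" and "a e \<noteq> 0"
    using assms(9) by blast
  then have "A > 0"
    unfolding A_def using assms(7) by (intro sum_pos2[of S e]) auto
  have "s \<ge> 0"
    unfolding s_def by simp
  have "A * s ^ k = t - C"
    unfolding s_def using \<open>A > 0\<close> assms(3,10) by (simp add: mult_power_root_div_root)
  have tail_events: "{\<omega> \<in> space M. \<bar>X i \<omega>\<bar> \<ge> s} \<in> events" if "i < n" for i
    using assms(5)[OF that] by measurable
  have "\<exists>i<n. s \<le> \<bar>X i \<omega>\<bar>"
    if "t \<le> (\<Sum>e\<in>S. a e * monomial_eval n e (\<lambda>i. X i \<omega>)) + C" for \<omega>
    using exists_abs_ge_if_sum_monomials_ge[OF assms(8) assms(2,3) \<open>A > 0\<close>[unfolded A_def] \<open>s \<ge> 0\<close>]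
      that \<open>A * s ^ k = t - C\<close> unfolding A_def by simp
  then have "{\<omega> \<in> space M. (\<Sum>e\<in>S. a e * monomial_eval n e (\<lambda>i. X i \<omega>)) + C \<ge> t}
      \<subseteq> (\<Union>i<n. {\<omega> \<in> space M. \<bar>X i \<omega>\<bar> \<ge> s})"
    by blast
  then have "measure M {\<omega> \<in> space M. (\<Sum>e\<in>S. a e * monomial_eval n e (\<lambda>i. X i \<omega>)) + C \<ge> t}
      \<le> measure M (\<Union>i<n. {\<omega> \<in> space M. \<bar>X i \<omega>\<bar> \<ge> s})"
    using tail_events by (intro finite_measure_mono) auto
  also have "\<dots> \<le> real n * f s"
    using tail_events assms(6)[OF _ \<open>s \<ge> 0\<close>] by (rule measure_UN_lessThan_le)
  finally show ?thesis
    unfolding s_def A_def .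
qed

end
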